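(* Let $\mathbf{A}$ be the constraint matrix of the relaxed nonbinary LDPC decoding problem constructed in the context. Then every entry of $\mathbf{A}$ belongs to $\{0,1,-1\}$.
   Context: Fix $q\ge1$; identify $\mathbb{F}_{2^q}$ with $\{0,\dots,2^q-1\}$ via binary expansion $\alpha=\sum_{i=1}^q c_i2^{i-1}$. A nonbinary code has parity-check matrix $\mathbf{H}\in\mathbb{F}_{2^q}^{m\times n}$ whose $j$th row has $d_j\ge3$ nonzero entries, at positions $\sigma_1,\dots,\sigma_{d_j}$ with coefficients $h_{\sigma_1},\dots,h_{\sigma_{d_j}}$. Each row is decomposed into $d_j-2$ three-variable checks using $d_j-3$ auxiliary symbols $g_1,\dots,g_{d_j-3}$: the first check involves $(u_{\sigma_1},h_{\sigma_1}),(u_{\sigma_2},h_{\sigma_2}),(g_1,1)$; for $t=2,\dots,d_j-3$ a check involves $(g_{t-1},1),(u_{\sigma_{t+1}},h_{\sigma_{t+1}}),(g_t,1)$; the last check involves $(g_{d_j-3},1),(u_{\sigma_{d_j-1}},h_{\sigma_{d_j-1}}),(u_{\sigma_{d_j}},h_{\sigma_{d_j}})$ (if $d_j=3$ there is a single check on the three code symbols). Altogether there are $\Gamma_c=\sum_j(d_j-2)$ three-variable checks and $\Gamma_a=\sum_j(d_j-3)$ auxiliary symbols, so $n+\Gamma_a$ symbols. For check $\tau$ let $h_{\tau,1},h_{\tau,2},h_{\tau,3}$ be its coefficients and $\mathbf{Q}_\tau\in\{0,1\}^{3\times(n+\Gamma_a)}$ the matrix whose $k$th row has a single $1$ at the index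 of its $k$th symbol. Let $\mathbf{D}(2^q,h)$ be the $(2^q-1)\times(2^q-1)$ matrix with $D_{ij}=1$ iff $i=j\cdot h$ in $\mathbb{F}_{2^q}$, and $\mathbf{D}_\tau=\mathrm{diag}(\mathbf{D}(2^q,h_{\tau,1}),\mathbf{D}(2^q,h_{\tau,2}),\mathbf{D}(2^q,h_{\tau,3}))$. Let $\mathbf{B}\in\{0,1\}^{q\times(2^q-1)}$ have $B_{i\alpha}$ equal to the $i$th binary digit (weight $2^{i-1}$) of $\alpha$. For $\ell=1,\dots,2^q-1$ let $\boldsymbol\beta_\ell\in\{0,1\}^{2^q-1}$, $(\boldsymbol\beta_\ell)_\alpha=\big(\sum_{i=1}^qB_{i\ell}B_{i\alpha}\big)\bmod 2$. Let $\mathbf{P}=\begin{bmatrix}1&-1&-1\\-1&1&-1\\-1&-1&1\\1&1&1\end{bmatrix}$. Set $\hat{\mathbf{W}}_\tau=[\mathbf{P}\,\mathrm{diag}(\boldsymbol\beta_1^T,\boldsymbol\beta_1^T,\boldsymbol\beta_1^T)\mathbf{D}_\tau;\dots;\mathbf{P}\,\mathrm{diag}(\boldsymbol\beta_{2^q-1}^T,\boldsymbol\beta_{2^q-1}^T,\boldsymbol\beta_{2^q-1}^T)\mathbf{D}_\tau]$, $\mathbf{S}=\mathbf{I}_{n+\Gamma_a}\otimes\mathbf{1}_{2^q-1}^T$, and $\mathbf{A}=[\hat{\mathbf{W}}_1(\mathbf{Q}_1\otimes\mathbf{I}_{2^q-1});\dots;\hat{\mathbf{W}}_{\Gamma_c}(\mathbf{Q}_{\Gamma_c}\otimes\mathbf{I}_{2^q-1});\mathbf{S}]$,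 where semicolons denote vertical stacking. *)

theory Defs
  imports "Jordan_Normal_Form.Matrix"
begin

(* Integer matrices are Jordan_Normal_Form "int mat"; all indices are 0-based.
   Row/column r of a (2^q-1)-sized block corresponds to the field element
   with integer label r+1. *)

fun stack :: "int mat list \<Rightarrow> nat \<Rightarrow> int mat" where
  "stack [] nc = 0\<^sub>m 0 nc"
| "stack (M # Ms) nc = M @\<^sub>r stack Ms nc"

definition bdiag3 :: "int mat \<Rightarrow> int mat \<Rightarrow> int mat \<Rightarrow> int mat" where
  "bdiag3 X Y Z =
     four_block_mat X (0\<^sub>m (dim_row X) (dim_col Y + dim_col Z))
       (0\<^sub>m (dim_row Y + dim_row Z) (dim_col X))
       (four_block_mat Y (0\<^sub>m (dim_row Y) (dim_col Z)) (0\<^sub>m (dim_row Z) (dim_col Y)) Z)"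

definition kron :: "int mat \<Rightarrow> int mat \<Rightarrow> int mat" where
  "kron X Y = mat (dim_row X * dim_row Y) (dim_col X * dim_col Y)
     (\<lambda>(i, j). X $$ (i div dim_row Y, j div dim_col Y) * Y $$ (i mod dim_row Y, j mod dim_col Y))"

definition Dmat :: "nat \<Rightarrow> ('f::field \<Rightarrow> nat) \<Rightarrow> 'f \<Rightarrow> int mat" where
  "Dmat q enc h = mat (2^q - 1) (2^q - 1)
     (\<lambda>(r, c). if Suc r = enc (inv_into UNIV enc (Suc c) * h) then 1 else 0)"

definition Bmat :: "nat \<Rightarrow> int mat" where
  "Bmat q = mat q (2^q - 1) (\<lambda>(i, c). if bit (Suc c) i then 1 else 0)"

definition beta_row :: "nat \<Rightarrow> nat \<Rightarrow> int mat" where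
  "beta_row q l = mat 1 (2^q - 1)
     (\<lambda>(_, c). (\<Sum>i<q. Bmat q $$ (i, l - 1) * Bmat q $$ (i, c)) mod 2)"

definition Pmat :: "int mat" where
  "Pmat = mat_of_rows_list 3 [[1, -1, -1], [-1, 1, -1], [-1, -1, 1], [1, 1, 1]]"

definition nz_pos :: "'f::field mat \<Rightarrow> nat \<Rightarrow> nat list" where
  "nz_pos H j = sorted_list_of_set {k. k < dim_col H \<and> H $$ (j, k) \<noteq> 0}"

definition row_deg :: "'f::field mat \<Rightarrow> nat \<Rightarrow> nat" where
  "row_deg H j = length (nz_pos H j)"

(* checks of row j: each check is a list of three (symbol index, coefficient);
   auxiliary symbol g_t of this row has index n + base + (t-1) *)
definition row_checks :: "'f::field mat \<Rightarrow> nat \<Rightarrow> nat \<Rightarrow> (nat \<times> 'f) list list" where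
  "row_checks H j base =
    (let s = nz_pos H j; d = length s; n = dim_col H;
         u = (\<lambda>k. (s ! k, H $$ (j, s ! k)));
         g = (\<lambda>t. (n + base + (t - 1), 1))
     in if d = 3 then [[u 0, u 1, u 2]]
        else [[u 0, u 1, g 1]]
             @ map (\<lambda>t. [g (t - 1), u t, g t]) [2..<d - 2]
             @ [[g (d - 3), u (d - 2), u (d - 1)]])"

definition aux_base :: "'f::field mat \<Rightarrow> nat \<Rightarrow> nat" where
  "aux_base H j = (\<Sum>j'<j. row_deg H j' - 3)"

definition all_checks :: "'f::field mat \<Rightarrow> (nat \<times> 'f) list list" where
  "all_checks H = concat (map (\<lambda>j. row_checks H j (aux_base H j)) [0..<dim_row H])"

definition Gamma_a :: "'f::field mat \<Rightarrow> nat" where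
  "Gamma_a H = (\<Sum>j<dim_row H. row_deg H j - 3)"

definition num_syms :: "'f::field mat \<Rightarrow> nat" where
  "num_syms H = dim_col H + Gamma_a H"

definition Qmat :: "nat \<Rightarrow> (nat \<times> 'f) list \<Rightarrow> int mat" where
  "Qmat N ch = mat 3 N (\<lambda>(k, c). if c = fst (ch ! k) then 1 else 0)"

definition Dtau :: "nat \<Rightarrow> ('f::field \<Rightarrow> nat) \<Rightarrow> (nat \<times> 'f) list \<Rightarrow> int mat" where
  "Dtau q enc ch = bdiag3 (Dmat q enc (snd (ch ! 0))) (Dmat q enc (snd (ch ! 1))) (Dmat q enc (snd (ch ! 2)))"

definition What :: "nat \<Rightarrow> ('f::field \<Rightarrow> nat) \<Rightarrow> (nat \<times> 'f) list \<Rightarrow> int mat" where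
  "What q enc ch = stack
     (map (\<lambda>l. Pmat * bdiag3 (beta_row q l) (beta_row q l) (beta_row q l) * Dtau q enc ch)
          [1..<2^q])
     (3 * (2^q - 1))"

definition Smat :: "nat \<Rightarrow> nat \<Rightarrow> int mat" where
  "Smat q N = kron (1\<^sub>m N) (mat 1 (2^q - 1) (\<lambda>_. 1))"

definition Amat :: "nat \<Rightarrow> ('f::field \<Rightarrow> nat) \<Rightarrow> 'f mat \<Rightarrow> int mat" where
  "Amat q enc H =
    (let N = num_syms H
     in stack (map (\<lambda>ch. What q enc ch * kron (Qmat N ch) (1\<^sub>m (2^q - 1))) (all_checks H) @ [Smat q N])
              (N * (2^q - 1)))"

end

theory Submission
  imports Defs
begin

(* Call a 0/1 matrix a selection matrix if each column has at most one nonzero entry.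
   Multiplying on the right by a selection matrix only copies columns of the left factor or
   produces zero columns, so it creates no entry outside a set containing 0. Every right factor
   in the blocks of A is a selection matrix: the block diagonal of the rows beta_l^T, D_tau (the
   row of the one in each column is determined by the column), Q_tau (x) I, provided the three
   symbols of the check are distinct, and likewise S. Hence all entries of A lie among those of
   P. Distinctness of the symbols holds because the nonzero positions of a row of H are distinct
   and auxiliary symbols are indexed from n on. *)

definition selection_mat :: "'a::zero_neq_one mat \<Rightarrow> bool" where
  "selection_mat M \<longleftrightarrow>
     (\<forall>i<dim_row M. \<forall>j<dim_col M. M $$ (i, j) \<in> {0, 1}) \<and>
     (\<forall>i<dim_row M. \<forall>i'<dim_row M. \<forall>j<dim_col M.
        M $$ (i, j) \<noteq> 0 \<longrightarrow> M $$ (i', j) \<noteq> 0 \<longrightarrow> i = i')"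

lemma elements_mat_subset_iff:
  "elements_mat M \<subseteq> S \<longleftrightarrow> (\<forall>i<dim_row M. \<forall>j<dim_col M. M $$ (i, j) \<in> S)"
  by (blast dest: elements_matD intro: elements_matI[OF carrier_matI])

lemma elements_selection_mat: "selection_mat M \<Longrightarrow> elements_mat M \<subseteq> {0, 1}"
  unfolding selection_mat_def elements_mat_subset_iff by blast

lemma index_mult_mat_sum:
  assumes "dim_col A = dim_row B" "i < dim_row A" "j < dim_col B"
  shows "(A * B) $$ (i, j) = (\<Sum>k<dim_row B. A $$ (i, k) * B $$ (k, j))"
proof -
  have "(A * B) $$ (i, j) = row A i \<bullet> col B j"
    using assms by simp
  also have "\<dots> = (\<Sum>k\<in>{0..<dim_row B}. row A i $ k * col B j $ k)"
    by (simp add: scalar_prod_def)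
  also have "\<dots> = (\<Sum>k<dim_row B. A $$ (i, k) * B $$ (k, j))"
    using assms by (auto simp: lessThan_atLeast0 intro!: sum.cong)
  finally show ?thesis .
qed

lemma elements_mult_selection_mat:
  fixes A B :: "'a::semiring_1 mat"
  assumes dims: "dim_col A = dim_row B" and A: "elements_mat A \<subseteq> S" and "0 \<in> S"
    and B: "selection_mat B"
  shows "elements_mat (A * B) \<subseteq> S"
  unfolding elements_mat_subset_iff
proof (intro allI impI)
  fix i j assume i: "i < dim_row (A * B)" and j: "j < dim_col (A * B)"
  let ?t = "\<lambda>k. A $$ (i, k) * B $$ (k, j)"
  have AB: "(A * B) $$ (i, j) = (\<Sum>k<dim_row B. ?t k)"
    by (rule index_mult_mat_sum) (use dims i j in auto)
  show "(A * B) $$ (i, j) \<in> S"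
  proof (cases "\<exists>k<dim_row B. B $$ (k, j) \<noteq> 0")
    case False
    then show ?thesis using AB \<open>0 \<in> S\<close> by simp
  next
    case True
    then obtain k where k: "k < dim_row B" "B $$ (k, j) \<noteq> 0" by blast
    have "B $$ (k, j) = 1"
      using B k j unfolding selection_mat_def by auto
    have "B $$ (k', j) = 0" if "k' < dim_row B" "k' \<noteq> k" for k'
    proof (rule ccontr)
      assume "B $$ (k', j) \<noteq> 0"
      then have "k' = k"
        using B k j that(1) unfolding selection_mat_def by simp
      then show False using that(2) by contradiction
    qed
    then have "\<forall>k'\<in>{..<dim_row B} - {k}. ?t k' = 0" by simp
    then have "(\<Sum>k'<dim_row B. ?t k') = (\<Sum>k'\<in>{k}. ?t k')"
      using k(1) by (intro sum.mono_neutral_right) auto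
    then have "(A * B) $$ (i, j) = A $$ (i, k)" using AB \<open>B $$ (k, j) = 1\<close> by simp
    then show ?thesis using A i k(1) dims unfolding elements_mat_subset_iff by simp
  qed
qed

lemma selection_mat_single_row:
  assumes "dim_row M = 1" and "elements_mat M \<subseteq> {0, 1}"
  shows "selection_mat M"
  using assms unfolding selection_mat_def elements_mat_subset_iff by simp

lemma selection_mat_one: "selection_mat (1\<^sub>m n :: 'a::zero_neq_one mat)"
  unfolding selection_mat_def by simp

lemma selection_mat_four_block_diag:
  fixes A D :: "'a::zero_neq_one mat"
  assumes A: "selection_mat A" and D: "selection_mat D"
  shows "selection_mat (four_block_mat A (0\<^sub>m (dim_row A) (dim_col D)) (0\<^sub>m (dim_row D) (dim_col A)) D)"
    (is "selection_mat ?F")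
  unfolding selection_mat_def
proof (intro conjI allI impI)
  fix i j assume "i < dim_row ?F" "j < dim_col ?F"
  then show "?F $$ (i, j) \<in> {0, 1}"
    using A D unfolding selection_mat_def by auto
next
  fix i i' j assume i: "i < dim_row ?F" and i': "i' < dim_row ?F" and j: "j < dim_col ?F"
    and nz: "?F $$ (i, j) \<noteq> 0" "?F $$ (i', j) \<noteq> 0"
  show "i = i'"
  proof (cases "j < dim_col A")
    case True
    with i i' j nz have "i < dim_row A" "i' < dim_row A" "A $$ (i, j) \<noteq> 0" "A $$ (i', j) \<noteq> 0"
      by (auto split: if_splits)
    then show ?thesis using A True unfolding selection_mat_def by blast
  next
    case False
    with i i' j nz have lower: "dim_row A \<le> i" "dim_row A \<le> i'"
      and "D $$ (i - dim_row A, j - dim_col A) \<noteq> 0" "D $$ (i' - dim_row A, j - dim_col A) \<noteq> 0"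
      by (auto split: if_splits)
    moreover have "i - dim_row A < dim_row D" "i' - dim_row A < dim_row D" "j - dim_col A < dim_col D"
      using i i' j False lower by auto
    ultimately have "i - dim_row A = i' - dim_row A"
      using D unfolding selection_mat_def by blast
    then show ?thesis using lower by simp
  qed
qed

lemma selection_mat_bdiag3:
  assumes "selection_mat X" "selection_mat Y" "selection_mat Z"
  shows "selection_mat (bdiag3 X Y Z)"
  using selection_mat_four_block_diag[OF assms(1) selection_mat_four_block_diag[OF assms(2,3)]]
  by (simp add: bdiag3_def)

lemma dim_bdiag3 [simp]:
  "dim_row (bdiag3 X Y Z) = dim_row X + dim_row Y + dim_row Z"
  "dim_col (bdiag3 X Y Z) = dim_col X + dim_col Y + dim_col Z"
  by (auto simp: bdiag3_def)

lemma dim_kron [simp]: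
  "dim_row (kron X Y) = dim_row X * dim_row Y" "dim_col (kron X Y) = dim_col X * dim_col Y"
  by (auto simp: kron_def)

lemma div_mod_less_mult:
  fixes i m n :: nat
  assumes "i < m * n"
  shows "i div n < m" "i mod n < n"
  using assms by (auto simp: less_mult_imp_div_less intro!: mod_less_divisor intro: gr0I)

lemma selection_mat_kron:
  assumes X: "selection_mat X" and Y: "selection_mat Y"
  shows "selection_mat (kron X Y)"
  unfolding selection_mat_def
proof (intro conjI allI impI)
  fix i j assume "i < dim_row (kron X Y)" "j < dim_col (kron X Y)"
  then have "i < dim_row X * dim_row Y" "j < dim_col X * dim_col Y" by simp_all
  with div_mod_less_mult[OF this(1)] div_mod_less_mult[OF this(2)]
  show "kron X Y $$ (i, j) \<in> {0, 1}"
    using X Y unfolding selection_mat_def kron_def by fastforce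
next
  fix i i' j assume "i < dim_row (kron X Y)" "i' < dim_row (kron X Y)" "j < dim_col (kron X Y)"
    and nz: "kron X Y $$ (i, j) \<noteq> 0" "kron X Y $$ (i', j) \<noteq> 0"
  then have i: "i < dim_row X * dim_row Y" and i': "i' < dim_row X * dim_row Y"
    and j: "j < dim_col X * dim_col Y" by simp_all
  note bounds = div_mod_less_mult[OF i] div_mod_less_mult[OF i'] div_mod_less_mult[OF j]
  have "X $$ (i div dim_row Y, j div dim_col Y) \<noteq> 0" "Y $$ (i mod dim_row Y, j mod dim_col Y) \<noteq> 0"
    "X $$ (i' div dim_row Y, j div dim_col Y) \<noteq> 0" "Y $$ (i' mod dim_row Y, j mod dim_col Y) \<noteq> 0"
    using nz i i' j by (auto simp: kron_def)
  then have "i div dim_row Y = i' div dim_row Y" "i mod dim_row Y = i' mod dim_row Y"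
    using X Y bounds unfolding selection_mat_def by blast+
  then show "i = i'" by (metis div_mult_mod_eq)
qed

lemma elements_append_rows:
  assumes "dim_col A = dim_col B"
  shows "elements_mat (A @\<^sub>r B) \<subseteq> elements_mat A \<union> elements_mat B"
proof -
  have "elements_mat (A @\<^sub>r B) \<subseteq> elements_mat A \<union> elements_mat (0\<^sub>m (dim_row A) 0)
      \<union> elements_mat B \<union> elements_mat (0\<^sub>m (dim_row B) 0)"
    unfolding append_rows_def using assms by (intro elements_four_block_mat) auto
  then show ?thesis by (simp add: elements_mat_def)
qed

lemma dim_col_stack: "\<forall>M\<in>set Ms. dim_col M = nc \<Longrightarrow> dim_col (stack Ms nc) = nc"
  by (induction Ms) (auto simp: append_rows_def)

lemma elements_stack:
  "\<forall>M\<in>set Ms. dim_col M = nc \<and> elements_mat M \<subseteq> S \<Longrightarrow> elements_mat (stack Ms nc) \<subseteq> S"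
proof (induction Ms)
  case Nil
  then show ?case by (simp add: elements_mat_def)
next
  case (Cons M Ms)
  then have "dim_col M = dim_col (stack Ms nc)" by (simp add: dim_col_stack)
  with Cons show ?case using elements_append_rows[of M "stack Ms nc"] by auto
qed

lemma dim_Dmat [simp]: "dim_row (Dmat q enc h) = 2^q - 1" "dim_col (Dmat q enc h) = 2^q - 1"
  by (simp_all add: Dmat_def)

lemma dim_beta_row [simp]: "dim_row (beta_row q l) = 1" "dim_col (beta_row q l) = 2^q - 1"
  by (simp_all add: beta_row_def)

lemma dim_Qmat [simp]: "dim_row (Qmat N ch) = 3" "dim_col (Qmat N ch) = N"
  by (simp_all add: Qmat_def)

lemma dim_Pmat [simp]: "dim_row Pmat = 4" "dim_col Pmat = 3"
  by (simp_all add: Pmat_def mat_of_rows_list_def)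

lemma elements_Pmat: "elements_mat Pmat \<subseteq> {0, 1, -1}"
  by (auto simp: Pmat_def mat_of_rows_list_def elements_mat_def upt_rec)

lemma selection_mat_Dmat: "selection_mat (Dmat q enc h)"
  unfolding selection_mat_def Dmat_def by auto

lemma selection_mat_beta_row: "selection_mat (beta_row q l)"
  by (rule selection_mat_single_row) (auto simp: beta_row_def elements_mat_subset_iff)

lemma selection_mat_Qmat:
  assumes "length ch = 3" and "distinct (map fst ch)"
  shows "selection_mat (Qmat N ch)"
  unfolding selection_mat_def
proof (intro conjI allI impI)
  fix k k' c assume "k < dim_row (Qmat N ch)" "k' < dim_row (Qmat N ch)" "c < dim_col (Qmat N ch)"
    and "Qmat N ch $$ (k, c) \<noteq> 0" "Qmat N ch $$ (k', c) \<noteq> 0"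
  then have "map fst ch ! k = map fst ch ! k'" "k < length ch" "k' < length ch"
    using assms(1) by (auto simp: Qmat_def split: if_splits)
  then show "k = k'" using assms(2) by (metis length_map nth_eq_iff_index_eq)
qed (auto simp: Qmat_def)

lemma selection_mat_Smat: "selection_mat (Smat q N)"
  unfolding Smat_def
  by (intro selection_mat_kron selection_mat_one selection_mat_single_row)
     (auto simp: elements_mat_subset_iff)

lemma dim_What [simp]: "dim_col (What q enc ch) = 3 * (2^q - 1)"
  unfolding What_def by (rule dim_col_stack) (auto simp: Dtau_def)

lemma elements_What: "elements_mat (What q enc ch) \<subseteq> {0, 1, -1}"
  unfolding What_def
proof (intro elements_stack ballI)
  fix M assume "M \<in> set (map (\<lambda>l. Pmat * bdiag3 (beta_row q l) (beta_row q l) (beta_row q l) * Dtau q enc ch) [1..<2^q])"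
  then obtain l where M: "M = Pmat * bdiag3 (beta_row q l) (beta_row q l) (beta_row q l) * Dtau q enc ch"
    by auto
  have "elements_mat (Pmat * bdiag3 (beta_row q l) (beta_row q l) (beta_row q l)) \<subseteq> {0, 1, -1}"
    by (rule elements_mult_selection_mat)
      (simp_all add: elements_Pmat selection_mat_bdiag3 selection_mat_beta_row)
  then have "elements_mat M \<subseteq> {0, 1, -1}"
    unfolding M Dtau_def
    by (rule elements_mult_selection_mat[rotated]) (simp_all add: selection_mat_bdiag3 selection_mat_Dmat)
  then show "dim_col M = 3 * (2^q - 1) \<and> elements_mat M \<subseteq> {0, 1, -1}"
    by (simp add: M Dtau_def)
qed

lemma elements_check_block:
  assumes "length ch = 3" and "distinct (map fst ch)"
  shows "elements_mat (What q enc ch * kron (Qmat N ch) (1\<^sub>m (2^q - 1))) \<subseteq> {0, 1, -1}"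
  by (rule elements_mult_selection_mat)
    (simp_all add: elements_What selection_mat_kron selection_mat_Qmat[OF assms] selection_mat_one)

lemma row_checks_distinct_symbols:
  assumes deg: "3 \<le> row_deg H j" and ch: "ch \<in> set (row_checks H j base)"
  shows "length ch = 3 \<and> distinct (map fst ch)"
proof -
  define s where "s = nz_pos H j"
  define d where "d = length s"
  define n where "n = dim_col H"
  define u where "u = (\<lambda>k. (s ! k, H $$ (j, s ! k)))"
  define g where "g = (\<lambda>t. (n + base + (t - 1), 1 :: 'a))"
  have checks: "row_checks H j base =
    (if d = 3 then [[u 0, u 1, u 2]]
     else [[u 0, u 1, g 1]] @ map (\<lambda>t. [g (t - 1), u t, g t]) [2..<d - 2]
          @ [[g (d - 3), u (d - 2), u (d - 1)]])"
    unfolding row_checks_def Let_def s_def d_def n_def u_def g_def ..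
  have "3 \<le> d" using deg unfolding d_def s_def row_deg_def .
  have "set s = {k. k < n \<and> H $$ (j, k) \<noteq> 0}" "distinct s"
    by (simp_all add: s_def n_def nz_pos_def)
  then have code: "fst (u k) < n" if "k < d" for k
    using that nth_mem[of k s] by (auto simp: u_def d_def)
  have code_inj: "fst (u k) \<noteq> fst (u k')" if "k < d" "k' < d" "k \<noteq> k'" for k k'
    using that \<open>distinct s\<close> by (simp add: u_def d_def nth_eq_iff_index_eq)
  have aux: "fst (g t) = n + base + (t - 1)" for t
    by (simp add: g_def)
  show ?thesis
  proof (cases "d = 3")
    case True
    then show ?thesis using ch checks code_inj by auto
  next
    case False
    with \<open>3 \<le> d\<close> have "4 \<le> d" by simp
    from ch False checks consider
      "ch = [u 0, u 1, g 1]"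
    | t where "2 \<le> t" "t < d - 2" "ch = [g (t - 1), u t, g t]"
    | "ch = [g (d - 3), u (d - 2), u (d - 1)]"
      by auto
    then show ?thesis
    proof cases
      case 1
      then show ?thesis using \<open>4 \<le> d\<close> code[of 0] code[of 1] code_inj[of 0 1] aux[of 1] by auto
    next
      case (2 t)
      then have "fst (u t) < n" using code by simp
      then show ?thesis using 2 aux[of t] aux[of "t - 1"] by auto
    next
      case 3
      then show ?thesis
        using \<open>4 \<le> d\<close> code[of "d - 2"] code[of "d - 1"] code_inj[of "d - 2" "d - 1"] aux[of "d - 3"]
        by auto
    qed
  qed
qed

lemma all_checks_distinct_symbols:
  assumes "\<And>j. j < dim_row H \<Longrightarrow> 3 \<le> row_deg H j" and "ch \<in> set (all_checks H)"
  shows "length ch = 3" "distinct (map fst ch)"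
  using assms row_checks_distinct_symbols unfolding all_checks_def by fastforce+

theorem fact1:
  fixes q :: nat and enc :: "'f::field \<Rightarrow> nat" and H :: "'f mat"
  assumes "q \<ge> 1"
    and "card (UNIV :: 'f set) = 2 ^ q"
    and "bij_betw enc UNIV {0..<2 ^ q}"
    and "\<And>a b. enc (a + b) = xor (enc a) (enc b)"
    and "\<And>j. j < dim_row H \<Longrightarrow> row_deg H j \<ge> 3"
  shows "elements_mat (Amat q enc H) \<subseteq> {0, 1, -1}"
proof -
  \<comment> \<open>Only the degree bound is used: the field structure and the labelling enc merely
    decide where the ones of D(2^q,h) sit, not that there is at most one per column.\<close>
  let ?N = "num_syms H" and ?M = "2^q - 1"
  have "elements_mat (What q enc ch * kron (Qmat ?N ch) (1\<^sub>m ?M)) \<subseteq> {0, 1, -1}"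
    if "ch \<in> set (all_checks H)" for ch
    by (rule elements_check_block[OF all_checks_distinct_symbols[OF assms(5) that]])
  moreover have "elements_mat (Smat q ?N) \<subseteq> {0, 1, -1}"
    using elements_selection_mat[OF selection_mat_Smat] by blast
  ultimately show ?thesis
    unfolding Amat_def Let_def by (intro elements_stack) (auto simp: Smat_def)
qed

end
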